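(* Let $S\subseteq\Sigma^n$ be a double-MDS-code and let $R\subseteq S$ be a prime double-code. Then $S$ is prime if and only if $\backslash_i R=\backslash_{i'}R$ for all $i,i'\in[n]$.
   Context: Let $\Sigma=\{0,1,2,3\}$, $[n]=\{1,\ldots,n\}$. An $i$-line of $\Sigma^n$ is a set of the four words that agree in all coordinates except the $i$th; a line is an $i$-line for some $i$. A double-code is a set meeting every line in $0$ or $2$ elements; a double-MDS-code is a set meeting every line in exactly $2$ elements; a double-code is complementable if contained in a double-MDS-code, and prime if complementable, nonempty and not partitionable into two or more nonempty double-codes. For $S\subseteq\Sigma^n$ and $i\in[n]$, $\mathcal E_i(S)$ is the union of all $i$-lines that meet $S$, and $\backslash_i S=\mathcal E_i(S)\setminus S$. *)

theory Defs
  imports Main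
begin

text \<open>Alphabet Sigma = {0,1,2,3}; words of Sigma^n are lists of length n over Sigma.
  Coordinates are numbered 1..n; coordinate i is list index i - 1.\<close>

definition Sigma :: "nat set" where
  "Sigma = {0, 1, 2, 3}"

definition words :: "nat \<Rightarrow> nat list set" where
  "words n = {x. length x = n \<and> set x \<subseteq> Sigma}"

definition iline :: "nat \<Rightarrow> nat list \<Rightarrow> nat list set" where
  "iline i x = {x[i - 1 := a] | a. a \<in> Sigma}"

definition ilines :: "nat \<Rightarrow> nat \<Rightarrow> nat list set set" where
  "ilines n i = {iline i x | x. x \<in> words n}"

definition lines :: "nat \<Rightarrow> nat list set set" where
  "lines n = (\<Union>i\<in>{1..n}. ilines n i)"

definition double_code :: "nat \<Rightarrow> nat list set \<Rightarrow> bool" where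
  "double_code n C \<longleftrightarrow> C \<subseteq> words n \<and> (\<forall>L\<in>lines n. card (C \<inter> L) = 0 \<or> card (C \<inter> L) = 2)"

definition double_MDS_code :: "nat \<Rightarrow> nat list set \<Rightarrow> bool" where
  "double_MDS_code n C \<longleftrightarrow> C \<subseteq> words n \<and> (\<forall>L\<in>lines n. card (C \<inter> L) = 2)"

definition complementable :: "nat \<Rightarrow> nat list set \<Rightarrow> bool" where
  "complementable n C \<longleftrightarrow> double_code n C \<and> (\<exists>M. double_MDS_code n M \<and> C \<subseteq> M)"

definition partitionable_dc :: "nat \<Rightarrow> nat list set \<Rightarrow> bool" where
  "partitionable_dc n C \<longleftrightarrow> (\<exists>P. \<Union>P = C \<and> 2 \<le> card P \<and>
      (\<forall>A\<in>P. \<forall>B\<in>P. A \<noteq> B \<longrightarrow> A \<inter> B = {}) \<and>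
      (\<forall>A\<in>P. A \<noteq> {} \<and> double_code n A))"

definition prime_dc :: "nat \<Rightarrow> nat list set \<Rightarrow> bool" where
  "prime_dc n C \<longleftrightarrow> complementable n C \<and> C \<noteq> {} \<and> \<not> partitionable_dc n C"

definition Ext :: "nat \<Rightarrow> nat \<Rightarrow> nat list set \<Rightarrow> nat list set" where
  "Ext n i S = \<Union>{L \<in> ilines n i. L \<inter> S \<noteq> {}}"

definition bsl :: "nat \<Rightarrow> nat \<Rightarrow> nat list set \<Rightarrow> nat list set" where
  "bsl n i S = Ext n i S - S"

end

theory Submission
  imports Defs
begin

text \<open>If \<open>S\<close> is prime then \<open>S = R\<close>, because \<open>S - R\<close> is again a double-code and \<open>{R, S - R}\<close>
  would otherwise partition \<open>S\<close>; and for the double-MDS-code \<open>R\<close> every \<open>\<backslash>\<^sub>i R\<close> is the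
  complement of \<open>R\<close>. Conversely, if all \<open>\<backslash>\<^sub>i R\<close> coincide then so do all \<open>\<E>\<^sub>i(R)\<close>; this common
  set is closed under changing any single coordinate, hence is all of \<open>\<Sigma>\<^sup>n\<close>. So every line
  through a word of \<open>S\<close> meets \<open>R\<close>, hence in two words, which are then the two words of \<open>S\<close> on
  it: \<open>S = R\<close>, which is prime.\<close>

lemma finite_Sigma: "finite Sigma"
  unfolding Sigma_def by simp

lemma words_0: "words 0 = {[]}"
  unfolding words_def Sigma_def by auto

lemma finite_iline: "finite (iline i x)"
proof -
  have "iline i x = (\<lambda>a. x[i - 1 := a]) ` Sigma"
    unfolding iline_def by auto
  then show ?thesis
    using finite_Sigma by simp
qed

lemma iline_subset_words: "x \<in> words n \<Longrightarrow> iline i x \<subseteq> words n"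
  unfolding iline_def words_def using set_update_subset_insert by fastforce

lemma iline_eq_if_mem: "y \<in> iline i x \<Longrightarrow> iline i y = iline i x"
  unfolding iline_def by auto

lemma update_mem_iline: "a \<in> Sigma \<Longrightarrow> x[i - 1 := a] \<in> iline i x"
  unfolding iline_def by auto

lemma mem_iline_self:
  assumes "x \<in> words n" "i \<in> {1..n}"
  shows "x \<in> iline i x"
proof -
  have "x ! (i - 1) \<in> Sigma"
    using assms nth_mem[of "i - 1" x] unfolding words_def by auto
  then show ?thesis
    using update_mem_iline[where a = "x ! (i - 1)" and i = i and x = x] by simp
qed

lemma iline_in_lines: "x \<in> words n \<Longrightarrow> i \<in> {1..n} \<Longrightarrow> iline i x \<in> lines n"
  unfolding lines_def ilines_def by blast

lemma finite_line: "L \<in> lines n \<Longrightarrow> finite L"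
  unfolding lines_def ilines_def using finite_iline by auto

lemma mem_Ext_iff: "y \<in> Ext n i R \<longleftrightarrow> (\<exists>x\<in>words n. y \<in> iline i x \<and> iline i x \<inter> R \<noteq> {})"
  unfolding Ext_def ilines_def by blast

lemma Ext_subset_words: "Ext n i R \<subseteq> words n"
  unfolding Ext_def ilines_def using iline_subset_words by blast

lemma subset_Ext:
  assumes "R \<subseteq> words n" "i \<in> {1..n}"
  shows "R \<subseteq> Ext n i R"
  using assms mem_iline_self mem_Ext_iff by blast

lemma Ext_update_closed:
  assumes "y \<in> Ext n i R" "a \<in> Sigma"
  shows "y[i - 1 := a] \<in> Ext n i R"
  using assms iline_eq_if_mem update_mem_iline unfolding mem_Ext_iff by metis

lemma Ext_eq_if_bsl_eq:
  assumes "R \<subseteq> words n" "i \<in> {1..n}" "i' \<in> {1..n}" "bsl n i R = bsl n i' R"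
  shows "Ext n i R = Ext n i' R"
  using assms subset_Ext[of R n] unfolding bsl_def by blast

lemma card_line_double_code:
  assumes "double_code n R" "L \<in> lines n" "L \<inter> R \<noteq> {}"
  shows "card (R \<inter> L) = 2"
  using assms finite_line[of L n] unfolding double_code_def by fastforce

lemma take_drop_update:
  assumes "length x = length y" "k < length y"
  shows "take (Suc k) y @ drop (Suc k) x = (take k y @ drop k x)[k := y ! k]"
  using assms by (intro nth_equalityI) (auto simp: nth_append nth_list_update min_def)

text \<open>The words \<open>take k y @ drop k x\<close> form a path from \<open>x\<close> to \<open>y\<close> changing one coordinate at a time.\<close>
lemma words_subset_if_update_closed:
  assumes closed: "\<And>j z a. j < n \<Longrightarrow> z \<in> E \<Longrightarrow> a \<in> Sigma \<Longrightarrow> z[j := a] \<in> E"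
    and x: "x \<in> E" "x \<in> words n"
  shows "words n \<subseteq> E"
proof
  fix y assume y: "y \<in> words n"
  have lengths: "length x = n" "length y = n"
    using x y unfolding words_def by auto
  have "k \<le> n \<Longrightarrow> take k y @ drop k x \<in> E" for k
  proof (induction k)
    case 0
    then show ?case using x by simp
  next
    case (Suc k)
    have "y ! k \<in> Sigma"
      using y Suc.prems nth_mem[of k y] unfolding words_def by auto
    then show ?case
      using take_drop_update[of x y k] lengths Suc closed by simp
  qed
  from this[of n] show "y \<in> E"
    using lengths by simp
qed

lemma Ext_eq_words:
  assumes Ext_eq: "\<forall>i\<in>{1..n}. \<forall>i'\<in>{1..n}. Ext n i R = Ext n i' R"
    and R: "R \<subseteq> words n" "R \<noteq> {}" and i: "i \<in> {1..n}"
  shows "Ext n i R = words n"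
proof
  show "Ext n i R \<subseteq> words n"
    by (rule Ext_subset_words)
next
  obtain r where r: "r \<in> R"
    using R(2) by blast
  show "words n \<subseteq> Ext n i R"
  proof (rule words_subset_if_update_closed)
    fix j z a assume j: "j < n" and z: "z \<in> Ext n i R" and a: "a \<in> Sigma"
    have "Suc j \<in> {1..n}"
      using j by simp
    then have "Ext n (Suc j) R = Ext n i R"
      using Ext_eq i by blast
    then show "z[j := a] \<in> Ext n i R"
      using Ext_update_closed[of z n "Suc j" R a] z a by simp
  qed (use r R(1) subset_Ext[OF R(1) i] in auto)
qed

lemma double_code_Diff:
  assumes S: "double_MDS_code n S" and R: "double_code n R" "R \<subseteq> S"
  shows "double_code n (S - R)"
  unfolding double_code_def
proof (intro conjI ballI)
  show "S - R \<subseteq> words n"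
    using S unfolding double_MDS_code_def by blast
next
  fix L assume L: "L \<in> lines n"
  have "(S - R) \<inter> L = (S \<inter> L) - (R \<inter> L)"
    by blast
  also have "card \<dots> = card (S \<inter> L) - card (R \<inter> L)"
    using R(2) finite_line[OF L] by (intro card_Diff_subset) auto
  finally have "card ((S - R) \<inter> L) = card (S \<inter> L) - card (R \<inter> L)" .
  moreover have "card (S \<inter> L) = 2"
    using S L unfolding double_MDS_code_def by blast
  moreover have "card (R \<inter> L) = 0 \<or> card (R \<inter> L) = 2"
    using R(1) L unfolding double_code_def by blast
  ultimately show "card ((S - R) \<inter> L) = 0 \<or> card ((S - R) \<inter> L) = 2"
    by auto
qed

lemma prime_double_MDS_code_eq:
  assumes S: "double_MDS_code n S" "prime_dc n S"
    and R: "double_code n R" "R \<subseteq> S" "R \<noteq> {}"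
  shows "S = R"
proof (rule ccontr)
  assume "S \<noteq> R"
  then have "partitionable_dc n S"
    unfolding partitionable_dc_def
    using R double_code_Diff[OF S(1) R(1,2)]
    by (intro exI[of _ "{R, S - R}"]) (auto simp: card_insert_if)
  then show False
    using S(2) unfolding prime_dc_def by blast
qed

lemma double_MDS_code_eq_if_Ext_eq_words:
  assumes S: "double_MDS_code n S" and R: "double_code n R" "R \<subseteq> S"
    and i: "i \<in> {1..n}" and Ext: "Ext n i R = words n"
  shows "S = R"
proof -
  have "x \<in> R" if x: "x \<in> S" for x
  proof -
    have xw: "x \<in> words n"
      using x S unfolding double_MDS_code_def by blast
    let ?L = "iline i x"
    have L: "?L \<in> lines n"
      using iline_in_lines[OF xw i] .
    obtain z where "x \<in> iline i z" "iline i z \<inter> R \<noteq> {}"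
      using Ext xw mem_Ext_iff by blast
    then have "card (R \<inter> ?L) = 2"
      using card_line_double_code[OF R(1) L] iline_eq_if_mem by metis
    moreover have "card (S \<inter> ?L) = 2"
      using S L unfolding double_MDS_code_def by blast
    ultimately have "R \<inter> ?L = S \<inter> ?L"
      using card_subset_eq[of "S \<inter> ?L" "R \<inter> ?L"] R(2) finite_iline by auto
    then show "x \<in> R"
      using x mem_iline_self[OF xw i] by blast
  qed
  then show ?thesis
    using R(2) by blast
qed

lemma double_MDS_code_eq_if_Ext_eq:
  assumes S: "double_MDS_code n S" and R: "double_code n R" "R \<subseteq> S" "R \<noteq> {}"
    and Ext_eq: "\<forall>i\<in>{1..n}. \<forall>i'\<in>{1..n}. Ext n i R = Ext n i' R"
  shows "S = R"
proof (cases "n = 0")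
  case True
  then have "S \<subseteq> {[]}"
    using S words_0 unfolding double_MDS_code_def by simp
  then show ?thesis
    using R(2,3) by (metis subset_singletonD subset_empty)
next
  case False
  then have "1 \<in> {1..n}"
    by simp
  moreover have "R \<subseteq> words n"
    using R(1) unfolding double_code_def by blast
  ultimately show ?thesis
    using double_MDS_code_eq_if_Ext_eq_words[OF S R(1,2)] Ext_eq_words[OF Ext_eq] R(3) by blast
qed

lemma bsl_double_MDS_code:
  assumes R: "double_MDS_code n R" and i: "i \<in> {1..n}"
  shows "bsl n i R = words n - R"
proof -
  have "iline i x \<inter> R \<noteq> {}" if "x \<in> words n" for x
  proof -
    have "card (R \<inter> iline i x) = 2"
      using R iline_in_lines[OF that i] unfolding double_MDS_code_def by blast
    then show ?thesis
      by (metis Int_commute card.empty zero_neq_numeral)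
  qed
  then have "words n \<subseteq> Ext n i R"
    using mem_iline_self[OF _ i] mem_Ext_iff by blast
  then show ?thesis
    using Ext_subset_words unfolding bsl_def by blast
qed

theorem proposition7:
  fixes n :: nat and S R :: "nat list set"
  assumes "double_MDS_code n S"
    and "R \<subseteq> S"
    and "prime_dc n R"
  shows "prime_dc n S \<longleftrightarrow> (\<forall>i\<in>{1..n}. \<forall>i'\<in>{1..n}. bsl n i R = bsl n i' R)"
proof -
  have R: "double_code n R" "R \<noteq> {}" "R \<subseteq> words n"
    using assms(3) unfolding prime_dc_def complementable_def double_code_def by auto
  show ?thesis
  proof
    assume "prime_dc n S"
    then have "S = R"
      using prime_double_MDS_code_eq assms(1,2) R(1,2) by blast
    then show "\<forall>i\<in>{1..n}. \<forall>i'\<in>{1..n}. bsl n i R = bsl n i' R"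
      using bsl_double_MDS_code assms(1) by simp
  next
    assume "\<forall>i\<in>{1..n}. \<forall>i'\<in>{1..n}. bsl n i R = bsl n i' R"
    then have "S = R"
      using double_MDS_code_eq_if_Ext_eq[OF assms(1) R(1) assms(2) R(2)]
        Ext_eq_if_bsl_eq[OF R(3)] by blast
    then show "prime_dc n S"
      using assms(3) by simp
  qed
qed

end
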